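(* If $K$ is a compact subset of $\mathfrak S_1(\mathbb T)$, then $$\lim_{\varepsilon\to0}\sup_{S\in K}d\big(S(\varepsilon),\mathbf 1\big)=0.$$
   Context: Rigged sets: each point has a multiplicity in $\{0,1,\dots,\infty\}$; an enumeration lists each point according to its multiplicity. $\mathfrak S_1(\mathbb T)$ is the set of countable rigged subsets of the unit circle $\mathbb T$ (arc-length metric) in which $1$ has infinite multiplicity, with no other accumulation point and with $d(S,\mathbf 1)<\infty$, where $d(S,T)=\inf\sum_j\mathrm{dist}(s_j,t_j)$ over enumerations and $\mathbf 1$ is $1$ with infinite multiplicity. For $S\in\mathfrak S_1(\mathbb T)$ and $\varepsilon>0$, $S(\varepsilon)$ is the rigged set of points of $S$ (with their multiplicities) at distance less than $\varepsilon$ from $1$. *)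

theory Defs
  imports "HOL-Analysis.Analysis" "HOL-Library.Extended_Nat" "HOL-Library.Extended_Nonnegative_Real"
begin

text \<open>The unit circle is represented inside the complex plane. A rigged set is a
multiplicity function assigning to every point a multiplicity in {0,1,...,infinity}.\<close>

type_synonym rigged = "complex \<Rightarrow> enat"

definition arcdist :: "complex \<Rightarrow> complex \<Rightarrow> real" where
  "arcdist z w = \<bar>Arg (z / w)\<bar>"

definition seq_mult :: "(nat \<Rightarrow> complex) \<Rightarrow> complex \<Rightarrow> enat" where
  "seq_mult s z = (if finite {j. s j = z} then enat (card {j. s j = z}) else \<infinity>)"

definition is_enum :: "(nat \<Rightarrow> complex) \<Rightarrow> rigged \<Rightarrow> bool" where
  "is_enum s S \<longleftrightarrow> (\<forall>z. seq_mult s z = S z)"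

definition rdist :: "rigged \<Rightarrow> rigged \<Rightarrow> ennreal" where
  "rdist S T = (INF st \<in> {(s, t). is_enum s S \<and> is_enum t T}.
                  (\<Sum>j. ennreal (arcdist (fst st j) (snd st j))))"

definition one_rig :: rigged where
  "one_rig z = (if z = 1 then \<infinity> else 0)"

definition S1T :: "rigged set" where
  "S1T = {S. (\<forall>z. S z \<noteq> 0 \<longrightarrow> cmod z = 1)
            \<and> countable {z. S z \<noteq> 0}
            \<and> S 1 = \<infinity>
            \<and> (\<forall>z. z islimpt {w. S w \<noteq> 0} \<longrightarrow> z = 1)
            \<and> rdist S one_rig < \<infinity>}"

text \<open>S(eps): the points of S at distance less than eps from 1, with their multiplicities.\<close>
definition rig_near1 :: "rigged \<Rightarrow> real \<Rightarrow> rigged" where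
  "rig_near1 S \<epsilon> z = (if arcdist z 1 < \<epsilon> then S z else 0)"

definition S1T_open :: "rigged set \<Rightarrow> bool" where
  "S1T_open U \<longleftrightarrow> U \<subseteq> S1T \<and>
     (\<forall>S\<in>U. \<exists>r>0. {T \<in> S1T. rdist S T < ennreal r} \<subseteq> U)"

definition S1T_compact :: "rigged set \<Rightarrow> bool" where
  "S1T_compact K \<longleftrightarrow> K \<subseteq> S1T \<and>
     (\<forall>\<U>. (\<forall>U\<in>\<U>. S1T_open U) \<and> K \<subseteq> \<Union>\<U> \<longrightarrow>
          (\<exists>\<F>\<subseteq>\<U>. finite \<F> \<and> K \<subseteq> \<Union>\<F>))"

end

theory Submission imports Defs begin

text \<open>Write F_T(\<epsilon>) = d(T(\<epsilon>), 1). The only enumeration of 1 is the constant sequence, so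
for any enumeration (t_j) of T, F_T(\<epsilon>) is the sum of dist(t_j, 1) over the j with
dist(t_j, 1) < \<epsilon>. Hence F_T is monotone and, the series of all dist(t_j, 1) being
convergent, F_T(\<epsilon>) \<longrightarrow> 0 for each fixed T. Matching enumerations termwise gives
F_T'(\<epsilon>) \<le> F_T(\<epsilon> + s) + s whenever d(T, T') < s, so the sets
{T. \<exists>r>0. F_T(\<delta> + r) + r < \<eta>} are open; for \<delta> > 0 they cover the whole space. A finite
subcover of K and the least of its \<delta>'s bound F_T(\<epsilon>) by \<eta> uniformly on K for small \<epsilon>,
as in Dini's theorem.\<close>

lemma arcdist_nonneg: "0 \<le> arcdist z w"
  by (simp add: arcdist_def)

lemma arcdist_self: "arcdist z z = 0"
  by (cases "z = 0") (auto simp: arcdist_def Arg_zero)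

lemma arcdist_sym: "arcdist z w = arcdist w z"
  unfolding arcdist_def by (metis Arg_inverse abs_minus_cancel inverse_divide Arg_zero inverse_zero)

lemma arcdist_triangle:
  assumes "y \<noteq> 0"
  shows "arcdist x z \<le> arcdist x y + arcdist y z"
proof (cases "x = 0 \<or> z = 0")
  case True
  then show ?thesis by (auto simp: arcdist_def)
next
  case False
  have "x / z = (x / y) * (y / z)"
    using assms False by (simp add: field_simps)
  moreover have "-pi < Arg (x / y)" "Arg (x / y) \<le> pi" "-pi < Arg (y / z)" "Arg (y / z) \<le> pi"
    using mpi_less_Arg Arg_le_pi by auto
  ultimately show ?thesis
    using Arg_times'[of "x / y" "y / z"] assms False
    unfolding arcdist_def by (auto split: if_splits)
qed

lemma seq_mult_eq_0_iff: "seq_mult s z = 0 \<longleftrightarrow> z \<notin> range s"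
  by (auto simp: seq_mult_def zero_enat_def card_eq_0_iff dest: infinite_imp_nonempty)

lemma is_enum_nonzero: "is_enum s S \<Longrightarrow> S (s j) \<noteq> 0"
  by (metis is_enum_def rangeI seq_mult_eq_0_iff)

text \<open>Two enumerations of the same rigged set have the same image measure on
\<open>count_space UNIV\<close>, hence the same series of nonnegative terms.\<close>

lemma emeasure_vimage_eq_if_seq_mult_eq:
  assumes "\<And>z. seq_mult s z = seq_mult t z"
  shows "emeasure (count_space UNIV) (s -` A) = emeasure (count_space UNIV) (t -` A)"
proof -
  define I where "I = A \<inter> (range s \<union> range t)"
  have I: "countable I"
    unfolding I_def by auto
  have disj: "disjoint_family_on (\<lambda>z. w -` {z}) I" for w :: "nat \<Rightarrow> complex"
    by (auto simp: disjoint_family_on_def)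
  have "s -` A = (\<Union>z\<in>I. s -` {z})" "t -` A = (\<Union>z\<in>I. t -` {z})"
    unfolding I_def by auto
  moreover have "emeasure (count_space UNIV) (s -` {z}) = emeasure (count_space UNIV) (t -` {z})" for z
  proof -
    have "s -` {z} = {j. s j = z}" "t -` {z} = {j. t j = z}"
      by auto
    then show ?thesis
      using assms[of z] unfolding seq_mult_def
      by (auto simp: emeasure_count_space split: if_splits)
  qed
  ultimately show ?thesis
    by (simp add: emeasure_UN_countable[OF _ I disj] cong: nn_integral_cong)
qed

lemma is_enum_suminf_eq:
  fixes f :: "complex \<Rightarrow> ennreal"
  assumes "is_enum s S" "is_enum t S"
  shows "(\<Sum>j. f (s j)) = (\<Sum>j. f (t j))"
proof -
  have "distr (count_space UNIV) (count_space UNIV) s = distr (count_space UNIV) (count_space UNIV) t"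
    using assms by (intro measure_eqI)
      (auto simp: emeasure_distr is_enum_def intro: emeasure_vimage_eq_if_seq_mult_eq)
  then show ?thesis
    by (metis nn_integral_distr[of _ "count_space UNIV" "count_space UNIV" f, simplified]
          nn_integral_count_space_nat)
qed

lemma is_enum_one_rig_iff: "is_enum t one_rig \<longleftrightarrow> t = (\<lambda>_. 1)"
proof
  assume t: "is_enum t one_rig"
  show "t = (\<lambda>_. 1)"
  proof
    fix j
    show "t j = 1"
      using is_enum_nonzero[OF t, of j] by (auto simp: one_rig_def split: if_splits)
  qed
qed (auto simp: is_enum_def seq_mult_def one_rig_def zero_enat_def)

lemma rdist_one_rig_eq_suminf:
  assumes "is_enum s S"
  shows "rdist S one_rig = (\<Sum>j. ennreal (arcdist (s j) 1))"
proof -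
  have "rdist S one_rig = (INF st\<in>{(s', t). is_enum s' S \<and> t = (\<lambda>_::nat. 1::complex)}. \<Sum>j. ennreal (arcdist (s j) 1))"
    unfolding rdist_def is_enum_one_rig_iff
    by (rule INF_cong[OF refl]) (auto intro: is_enum_suminf_eq[OF _ assms])
  also have "\<dots> = (\<Sum>j. ennreal (arcdist (s j) 1))"
    using assms by (intro INF_const) blast
  finally show ?thesis .
qed

lemma S1T_one: "S \<in> S1T \<Longrightarrow> S 1 = \<infinity>"
  unfolding S1T_def by blast

lemma S1T_obtains_enum:
  assumes "S \<in> S1T"
  obtains s where "is_enum s S"
proof -
  have "rdist S one_rig < top"
    using assms unfolding S1T_def by auto
  then show ?thesis
    using that unfolding rdist_def INF_less_iff by blast
qed

lemma S1T_enum_nonzero: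
  assumes "S \<in> S1T" "is_enum s S"
  shows "s j \<noteq> 0"
proof -
  have "cmod (s j) = 1"
    using assms is_enum_nonzero[of s S j] unfolding S1T_def by blast
  then show ?thesis
    by auto
qed

text \<open>Points at distance \<open>\<ge> \<epsilon>\<close> from \<open>1\<close> are moved to \<open>1\<close>, which does not change an
infinite multiplicity and costs nothing in the distance to \<open>one_rig\<close>.\<close>

lemma is_enum_rig_near1:
  assumes s: "is_enum s S" and "S 1 = \<infinity>" and "0 < \<epsilon>"
  shows "is_enum (\<lambda>j. if arcdist (s j) 1 < \<epsilon> then s j else 1) (rig_near1 S \<epsilon>)"
  unfolding is_enum_def
proof
  fix z
  define s' where "s' = (\<lambda>j. if arcdist (s j) 1 < \<epsilon> then s j else 1)"
  show "seq_mult s' z = rig_near1 S \<epsilon> z"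
  proof (cases "z = 1")
    case True
    have "infinite {j. s j = 1}"
      using s[unfolded is_enum_def, rule_format, of 1] \<open>S 1 = \<infinity>\<close>
      by (simp add: seq_mult_def split: if_splits)
    moreover have "{j. s j = 1} \<subseteq> {j. s' j = 1}"
      by (auto simp: s'_def)
    ultimately have "infinite {j. s' j = 1}"
      using finite_subset by blast
    then show ?thesis
      using True assms by (simp add: seq_mult_def rig_near1_def arcdist_self)
  next
    case False
    then have "{j. s' j = z} = (if arcdist z 1 < \<epsilon> then {j. s j = z} else {})"
      by (auto simp: s'_def)
    then show ?thesis
      using s[unfolded is_enum_def, rule_format, of z]
      by (simp add: seq_mult_def rig_near1_def zero_enat_def split: if_splits)
  qed
qed

definition near1_dist :: "rigged \<Rightarrow> real \<Rightarrow> ennreal" where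
  "near1_dist S \<epsilon> = rdist (rig_near1 S \<epsilon>) one_rig"

lemma near1_dist_eq_suminf:
  assumes "is_enum s S" "S 1 = \<infinity>" "0 < \<epsilon>"
  shows "near1_dist S \<epsilon> = (\<Sum>j. ennreal (if arcdist (s j) 1 < \<epsilon> then arcdist (s j) 1 else 0))"
  unfolding near1_dist_def rdist_one_rig_eq_suminf[OF is_enum_rig_near1[OF assms]]
  by (rule suminf_cong) (simp add: arcdist_self)

lemma near1_dist_mono:
  assumes "S \<in> S1T" "0 < \<epsilon>" "\<epsilon> \<le> \<epsilon>'"
  shows "near1_dist S \<epsilon> \<le> near1_dist S \<epsilon>'"
proof -
  obtain s where s: "is_enum s S"
    using S1T_obtains_enum[OF assms(1)] .
  have "0 < \<epsilon>'"
    using assms by linarith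
  with assms show ?thesis
    unfolding near1_dist_eq_suminf[OF s S1T_one[OF assms(1)] assms(2)]
      near1_dist_eq_suminf[OF s S1T_one[OF assms(1)] \<open>0 < \<epsilon>'\<close>]
    by (intro suminf_le) (auto intro: ennreal_leI)
qed

lemma truncated_arcdist_shift:
  assumes "p \<noteq> 0" "q \<noteq> 0" "arcdist p q < r"
  shows "(if arcdist q 1 < \<epsilon> then arcdist q 1 else 0)
           \<le> (if arcdist p 1 < \<epsilon> + r then arcdist p 1 else 0) + arcdist p q"
proof -
  have "arcdist q 1 \<le> arcdist p q + arcdist p 1"
    using arcdist_triangle[OF assms(1), of q 1] arcdist_sym[of q p] by simp
  moreover have "arcdist p 1 \<le> arcdist p q + arcdist q 1"
    using arcdist_triangle[OF assms(2), of p 1] .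
  ultimately show ?thesis
    using assms(3) arcdist_nonneg[of p q] arcdist_nonneg[of p 1] by auto
qed

text \<open>Pairing up enumerations that nearly realise \<open>d(S, S')\<close>: each point of \<open>S'\<close> within
\<open>\<epsilon>\<close> of \<open>1\<close> is matched with a point of \<open>S\<close> within \<open>\<epsilon> + r\<close> of \<open>1\<close>.\<close>

lemma near1_dist_shift:
  assumes S: "S \<in> S1T" and S': "S' \<in> S1T" and d: "rdist S S' < ennreal r" and "0 < \<epsilon>"
  shows "near1_dist S' \<epsilon> \<le> near1_dist S (\<epsilon> + r) + ennreal r"
proof -
  obtain p q where p: "is_enum p S" and q: "is_enum q S'"
    and pq: "(\<Sum>j. ennreal (arcdist (p j) (q j))) < ennreal r"
    using d unfolding rdist_def INF_less_iff by auto
  have close: "arcdist (p j) (q j) < r" for j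
    using ennreal_suminf_lessD[OF pq, of j] by (simp add: ennreal_less_iff arcdist_nonneg)
  then have "0 < r"
    using arcdist_nonneg le_less_trans by blast
  have "near1_dist S' \<epsilon> = (\<Sum>j. ennreal (if arcdist (q j) 1 < \<epsilon> then arcdist (q j) 1 else 0))"
    using near1_dist_eq_suminf[OF q S1T_one[OF S'] \<open>0 < \<epsilon>\<close>] .
  also have "\<dots> \<le> (\<Sum>j. ennreal (if arcdist (p j) 1 < \<epsilon> + r then arcdist (p j) 1 else 0)
                        + ennreal (arcdist (p j) (q j)))"
    using truncated_arcdist_shift[OF S1T_enum_nonzero[OF S p] S1T_enum_nonzero[OF S' q] close]
    by (intro suminf_le) (auto simp: arcdist_nonneg simp flip: ennreal_plus intro!: ennreal_leI)
  also have "\<dots> = near1_dist S (\<epsilon> + r) + (\<Sum>j. ennreal (arcdist (p j) (q j)))"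
    using near1_dist_eq_suminf[OF p S1T_one[OF S], of "\<epsilon> + r"] \<open>0 < \<epsilon>\<close> \<open>0 < r\<close>
    by (simp add: suminf_add)
  also have "\<dots> \<le> near1_dist S (\<epsilon> + r) + ennreal r"
    using pq by (intro add_left_mono) simp
  finally show ?thesis .
qed

text \<open>Small terms only occur beyond any given index \<open>N\<close> once \<open>\<delta>\<close> is below the positive
terms among the first \<open>N\<close>; choose \<open>N\<close> so that the tail is below \<open>\<eta>\<close>.\<close>

lemma suminf_small_terms_lt:
  fixes f :: "nat \<Rightarrow> real"
  assumes f: "summable f" "\<And>j. 0 \<le> f j" and "0 < \<eta>"
  obtains \<delta> where "0 < \<delta>" "(\<Sum>j. if f j < \<delta> then f j else 0) < \<eta>"
proof -
  obtain N where N: "\<And>n. N \<le> n \<Longrightarrow> norm (\<Sum>i. f (i + n)) < \<eta>"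
    using suminf_exist_split[OF \<open>0 < \<eta>\<close> f(1)] by blast
  define D where "D = insert 1 (f ` {j. j < N \<and> 0 < f j})"
  define \<delta> where "\<delta> = Min D"
  have D: "finite D" "D \<noteq> {}" "\<forall>x\<in>D. 0 < x"
    unfolding D_def by auto
  then have "0 < \<delta>"
    unfolding \<delta>_def using Min_gr_iff by blast
  define g where "g j = (if f j < \<delta> then f j else 0)" for j
  have g: "0 \<le> g j" "g j \<le> f j" for j
    using f(2)[of j] by (auto simp: g_def)
  have g_init: "g j = 0" if "j < N" for j
  proof (cases "0 < f j")
    case True
    then have "\<delta> \<le> f j"
      unfolding \<delta>_def using D(1) that by (intro Min_le) (auto simp: D_def)
    then show ?thesis
      by (simp add: g_def)
  qed (use f(2)[of j] in \<open>auto simp: g_def\<close>)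
  have "summable g"
    using g by (intro summable_comparison_test'[OF f(1), where N = 0]) simp
  then have "(\<Sum>j. g j) = (\<Sum>i. g (i + N))"
    using suminf_split_initial_segment[of g N] g_init by simp
  also have "\<dots> \<le> (\<Sum>i. f (i + N))"
    using g(2) by (intro suminf_le summable_ignore_initial_segment \<open>summable g\<close> f(1))
  also have "\<dots> < \<eta>"
    using N[of N] by simp
  finally show ?thesis
    using that \<open>0 < \<delta>\<close> unfolding g_def by blast
qed

lemma near1_dist_small:
  assumes "S \<in> S1T" "0 < \<eta>"
  obtains \<delta> where "0 < \<delta>" "near1_dist S \<delta> < ennreal \<eta>"
proof -
  obtain s where s: "is_enum s S"
    using S1T_obtains_enum[OF assms(1)] .
  have "rdist S one_rig < \<infinity>"
    using assms(1) unfolding S1T_def by blast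
  then have "(\<Sum>j. ennreal (arcdist (s j) 1)) \<noteq> top"
    unfolding rdist_one_rig_eq_suminf[OF s] by simp
  then have summable: "summable (\<lambda>j. arcdist (s j) 1)"
    by (rule summable_suminf_not_top[rotated]) (rule arcdist_nonneg)
  obtain \<delta> where "0 < \<delta>"
    and lt: "(\<Sum>j. if arcdist (s j) 1 < \<delta> then arcdist (s j) 1 else 0) < \<eta>"
    by (rule suminf_small_terms_lt[OF summable arcdist_nonneg \<open>0 < \<eta>\<close>])
  have "near1_dist S \<delta> = ennreal (\<Sum>j. if arcdist (s j) 1 < \<delta> then arcdist (s j) 1 else 0)"
    unfolding near1_dist_eq_suminf[OF s S1T_one[OF assms(1)] \<open>0 < \<delta>\<close>]
    by (intro suminf_ennreal2 summable_comparison_test'[OF summable, where N = 0])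
      (simp_all add: arcdist_nonneg)
  also have "\<dots> < ennreal \<eta>"
    using lt \<open>0 < \<eta>\<close> by (rule ennreal_lessI[rotated])
  finally show ?thesis
    using \<open>0 < \<delta>\<close> that by blast
qed

definition near1_sublevel :: "real \<Rightarrow> real \<Rightarrow> rigged set" where
  "near1_sublevel \<eta> \<delta> = {S \<in> S1T. \<exists>r>0. near1_dist S (\<delta> + r) + ennreal r < ennreal \<eta>}"

lemma near1_dist_le_if_near1_sublevel:
  assumes "S \<in> near1_sublevel \<eta> \<delta>" "0 < \<epsilon>" "\<epsilon> \<le> \<delta>"
  shows "near1_dist S \<epsilon> \<le> ennreal \<eta>"
proof -
  obtain r where "S \<in> S1T" "0 < r" and lt: "near1_dist S (\<delta> + r) + ennreal r < ennreal \<eta>"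
    using assms(1) unfolding near1_sublevel_def by blast
  then have "near1_dist S \<epsilon> \<le> near1_dist S (\<delta> + r)"
    using assms by (intro near1_dist_mono) auto
  also have "\<dots> \<le> near1_dist S (\<delta> + r) + ennreal r"
    by simp
  finally show ?thesis
    using lt by simp
qed

lemma S1T_open_near1_sublevel:
  assumes "0 < \<delta>"
  shows "S1T_open (near1_sublevel \<eta> \<delta>)"
  unfolding S1T_open_def
proof (intro conjI ballI)
  show "near1_sublevel \<eta> \<delta> \<subseteq> S1T"
    by (auto simp: near1_sublevel_def)
next
  fix S
  assume "S \<in> near1_sublevel \<eta> \<delta>"
  then obtain r where S: "S \<in> S1T" and "0 < r"
    and lt: "near1_dist S (\<delta> + r) + ennreal r < ennreal \<eta>"
    unfolding near1_sublevel_def by blast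
  have "S' \<in> near1_sublevel \<eta> \<delta>" if S': "S' \<in> S1T" and d: "rdist S S' < ennreal (r / 2)" for S'
  proof -
    have "near1_dist S' (\<delta> + r / 2) \<le> near1_dist S (\<delta> + r / 2 + r / 2) + ennreal (r / 2)"
      using assms \<open>0 < r\<close> by (intro near1_dist_shift[OF S S' d]) simp
    then have "near1_dist S' (\<delta> + r / 2) + ennreal (r / 2)
            \<le> near1_dist S (\<delta> + r) + (ennreal (r / 2) + ennreal (r / 2))"
      by (simp add: add.assoc add_right_mono)
    also have "\<dots> = near1_dist S (\<delta> + r) + ennreal r"
      using \<open>0 < r\<close> by (simp flip: ennreal_plus)
    finally show ?thesis
      using S' lt \<open>0 < r\<close> unfolding near1_sublevel_def
      by (intro CollectI conjI exI[of _ "r / 2"]) auto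
  qed
  then show "\<exists>r>0. {S' \<in> S1T. rdist S S' < ennreal r} \<subseteq> near1_sublevel \<eta> \<delta>"
    using \<open>0 < r\<close> by (intro exI[of _ "r / 2"]) auto
qed

lemma S1T_subset_near1_sublevels:
  assumes "0 < \<eta>"
  shows "S1T \<subseteq> (\<Union>\<delta>\<in>{0<..}. near1_sublevel \<eta> \<delta>)"
proof
  fix S
  assume S: "S \<in> S1T"
  obtain \<delta> where "0 < \<delta>" and small: "near1_dist S \<delta> < ennreal (\<eta> / 2)"
    using near1_dist_small[OF S, of "\<eta> / 2"] assms by auto
  define r where "r = min (\<delta> / 2) (\<eta> / 4)"
  have "0 < r" "\<delta> / 2 + r \<le> \<delta>" "\<eta> / 2 + r < \<eta>"
    using \<open>0 < \<delta>\<close> assms by (auto simp: r_def)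
  have "near1_dist S (\<delta> / 2 + r) + ennreal r \<le> near1_dist S \<delta> + ennreal r"
    using S \<open>0 < \<delta>\<close> \<open>0 < r\<close> \<open>\<delta> / 2 + r \<le> \<delta>\<close> by (intro add_right_mono near1_dist_mono) auto
  also have "\<dots> < ennreal (\<eta> / 2) + ennreal r"
    using small by (simp add: ennreal_add_left_cancel_less add.commute)
  also have "\<dots> = ennreal (\<eta> / 2 + r)"
    using \<open>0 < r\<close> assms by simp
  also have "\<dots> < ennreal \<eta>"
    using \<open>\<eta> / 2 + r < \<eta>\<close> assms by (intro ennreal_lessI)
  finally have "S \<in> near1_sublevel \<eta> (\<delta> / 2)"
    using S \<open>0 < r\<close> unfolding near1_sublevel_def by blast
  then show "S \<in> (\<Union>\<delta>\<in>{0<..}. near1_sublevel \<eta> \<delta>)"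
    using \<open>0 < \<delta>\<close> by auto
qed

lemma S1T_compact_near1_dist_uniform:
  assumes K: "S1T_compact K" and "0 < \<eta>"
  obtains e where "0 < e" "\<And>S \<epsilon>. S \<in> K \<Longrightarrow> 0 < \<epsilon> \<Longrightarrow> \<epsilon> < e \<Longrightarrow> near1_dist S \<epsilon> \<le> ennreal \<eta>"
proof -
  have "K \<subseteq> (\<Union>\<delta>\<in>{0<..}. near1_sublevel \<eta> \<delta>)"
    using K S1T_subset_near1_sublevels[OF \<open>0 < \<eta>\<close>] unfolding S1T_compact_def by blast
  moreover have "\<forall>U \<in> near1_sublevel \<eta> ` {0<..}. S1T_open U"
    using S1T_open_near1_sublevel by auto
  ultimately obtain \<F> where "\<F> \<subseteq> near1_sublevel \<eta> ` {0<..}" "finite \<F>" "K \<subseteq> \<Union>\<F>"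
    using K unfolding S1T_compact_def by blast
  then obtain D where D: "D \<subseteq> {0<..}" "finite D" "K \<subseteq> (\<Union>\<delta>\<in>D. near1_sublevel \<eta> \<delta>)"
    by (metis finite_subset_image)
  define e where "e = Min (insert 1 D)"
  have "0 < e"
    using D by (auto simp: e_def)
  moreover have "near1_dist S \<epsilon> \<le> ennreal \<eta>" if "S \<in> K" "0 < \<epsilon>" "\<epsilon> < e" for S \<epsilon>
  proof -
    obtain \<delta> where "\<delta> \<in> D" "S \<in> near1_sublevel \<eta> \<delta>"
      using D(3) \<open>S \<in> K\<close> by blast
    moreover have "e \<le> \<delta>"
      using D(2) \<open>\<delta> \<in> D\<close> by (simp add: e_def)
    ultimately show ?thesis
      using that by (intro near1_dist_le_if_near1_sublevel) auto
  qed
  ultimately show ?thesis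
    using that by blast
qed

theorem mainTheorem14:
  assumes "S1T_compact K"
  shows "((\<lambda>\<epsilon>. SUP S\<in>K. rdist (rig_near1 S \<epsilon>) one_rig) \<longlongrightarrow> 0) (at_right (0::real))"
proof (rule tendsto_zero_ennreal)
  fix r :: real
  assume "0 < r"
  then obtain e where "0 < e"
    and uniform: "\<And>S \<epsilon>. S \<in> K \<Longrightarrow> 0 < \<epsilon> \<Longrightarrow> \<epsilon> < e \<Longrightarrow> near1_dist S \<epsilon> \<le> ennreal (r / 2)"
    using S1T_compact_near1_dist_uniform[OF assms, of "r / 2"] by auto
  have "(SUP S\<in>K. rdist (rig_near1 S \<epsilon>) one_rig) < ennreal r" if "0 < \<epsilon>" "\<epsilon> < e" for \<epsilon>
  proof -
    have "(SUP S\<in>K. rdist (rig_near1 S \<epsilon>) one_rig) \<le> ennreal (r / 2)"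
      using uniform that unfolding near1_dist_def by (intro SUP_least) auto
    also have "\<dots> < ennreal r"
      using \<open>0 < r\<close> by (simp add: ennreal_lessI)
    finally show ?thesis .
  qed
  then show "\<forall>\<^sub>F \<epsilon> in at_right 0. (SUP S\<in>K. rdist (rig_near1 S \<epsilon>) one_rig) < ennreal r"
    using \<open>0 < e\<close> unfolding eventually_at_right_field by blast
qed

end
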